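(* Let $(X_i)_{i\in\mathbb{T}}$ ($\mathbb{T}$ one of $\mathbb{Z},\mathbb{N},\mathbb{N}\setminus\{0\}$) be a stationary sequence of $\mathbb{R}^d$-valued random variables such that the distribution of $X_1$ is supported on a compact set $\mathbb{M}\subset\mathbb{R}^d$. Let $n\ge1$, $\epsilon>0$, and let $k,r$ be positive integers with $kr\le n$. For $1\le i\le k$ let $Y_{i,r}=(X_{(i-1)r+1},\ldots,X_{ir})^t\in\mathbb{R}^{dr}$, let $\mathbb{Y}_k=\{Y_{1,r},\ldots,Y_{k,r}\}$, and let $\mathbb{M}_{dr}\subset\mathbb{R}^{dr}$ be the support of $Y_{1,r}$. Then, with $\mathbb{X}_n=\{X_1,\ldots,X_n\}$, $$\mathbb{P}\big(d_H(\mathbb{X}_n,\mathbb{M})>\epsilon\big)\le \mathbb{P}\big(d_H(\mathbb{Y}_k,\mathbb{M}_{dr})>\epsilon\big)\le \frac{\sup_{x\in\mathbb{M}_{dr}}\mathbb{P}\big(\min_{1\le i\le k}\|Y_{i,r}-x\|>\epsilon/2\big)}{1-\sup_{x\in\mathbb{M}_{dr}}\mathbb{P}\big(\|Y_{1,r}-x\|>\epsilon/4\big)}.$$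
   Context: The support of a random vector is the smallest closed set carrying its full mass. Norms are Euclidean. $d_H$ is the Hausdorff distance between closed sets: $d_H(A,B)=\max\big(\sup_{x\in A}\inf_{y\in B}\|x-y\|,\ \sup_{x\in B}\inf_{y\in A}\|x-y\|\big)$; finite sets of random points are viewed as subsets of the ambient Euclidean space. *)

theory Defs
  imports "HOL-Probability.Probability"
begin

text \<open>Stationarity of a sequence indexed by the naturals, required only for the
  indices \<open>\<ge> 1\<close> (this covers index sets Z, N and N without 0): all finite-dimensional
  distributions of consecutive windows starting at any index \<open>t \<ge> 1\<close> are shift-invariant.\<close>
definition stationary :: "'w measure \<Rightarrow> (nat \<Rightarrow> 'w \<Rightarrow> 'a::topological_space) \<Rightarrow> bool" where
  "stationary M X \<longleftrightarrow>
     (\<forall>m t h. t \<ge> 1 \<longrightarrow>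
        distr M (\<Pi>\<^sub>M j\<in>{..<m}. borel) (\<lambda>w. \<lambda>j\<in>{..<m}. X (t + j) w)
      = distr M (\<Pi>\<^sub>M j\<in>{..<m}. borel) (\<lambda>w. \<lambda>j\<in>{..<m}. X (t + h + j) w))"

definition closed_wrt :: "('b \<Rightarrow> 'b \<Rightarrow> real) \<Rightarrow> 'b set \<Rightarrow> 'b set \<Rightarrow> bool" where
  "closed_wrt d S C \<longleftrightarrow> C \<subseteq> S \<and> (\<forall>x\<in>S. (\<forall>e>0. \<exists>y\<in>C. d x y < e) \<longrightarrow> x \<in> C)"

definition rv_support :: "'w measure \<Rightarrow> ('b \<Rightarrow> 'b \<Rightarrow> real) \<Rightarrow> 'b set \<Rightarrow> ('w \<Rightarrow> 'b) \<Rightarrow> 'b set" where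
  "rv_support M d S Z = \<Inter>{C. closed_wrt d S C \<and> (AE w in M. Z w \<in> C)}"

definition hausdorff_dist :: "('b \<Rightarrow> 'b \<Rightarrow> real) \<Rightarrow> 'b set \<Rightarrow> 'b set \<Rightarrow> ereal" where
  "hausdorff_dist d A B =
     max (SUP x\<in>A. INF y\<in>B. ereal (d x y)) (SUP x\<in>B. INF y\<in>A. ereal (d x y))"

text \<open>R^(dr) modelled as blocks: extensional functions on \<open>{..<r}\<close> with values in R^d,
  with the Euclidean norm of the concatenated vector.\<close>
definition blocks :: "nat \<Rightarrow> (nat \<Rightarrow> 'a) set" where
  "blocks r = PiE {..<r} (\<lambda>_. UNIV)"

definition block_dist :: "nat \<Rightarrow> (nat \<Rightarrow> 'a::real_normed_vector) \<Rightarrow> (nat \<Rightarrow> 'a) \<Rightarrow> real" where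
  "block_dist r y z = sqrt (\<Sum>j<r. (norm (y j - z j))\<^sup>2)"

end

theory Submission
  imports Defs
begin

text \<open>
  Almost surely every sample point lies in the corresponding support, so a Hausdorff distance
  exceeding \<open>\<epsilon>\<close> can only come from a point of the support that is \<open>\<epsilon>\<close>-far from all sample points.

  First inequality: the first coordinates of the points of \<open>M_dr\<close> are dense in \<open>M\<close>, so a point
  of \<open>M\<close> that is \<open>\<epsilon>\<close>-far from \<open>X_1, ..., X_n\<close> can be replaced by a point \<open>y\<close> of \<open>M_dr\<close> whose
  first coordinate is still \<open>\<epsilon>\<close>-far from them. The block distance dominates the distance of first
  coordinates, so \<open>y\<close> is \<open>\<epsilon>\<close>-far from all blocks.

  Second inequality: if \<open>x \<in> M_dr\<close> is \<open>\<epsilon>\<close>-far from all blocks, an independent copy \<open>Y'\<close> of \<open>Y_1\<close>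
  satisfies \<open>\<parallel>Y' - x\<parallel> \<le> \<epsilon>/4\<close> with probability at least \<open>1 - s\<close>, where \<open>s\<close> is the supremum
  in the denominator, and then all blocks are \<open>\<epsilon>/2\<close>-far from \<open>Y'\<close>. Integrating over \<open>Y'\<close>
  first instead (Fubini), the probability of the latter event is at most the supremum in the
  numerator.

  Supports in separable spaces carry full mass, and replacing them by countable dense subsets
  makes the Hausdorff events measurable.
\<close>

definition dense_wrt :: "('b \<Rightarrow> 'b \<Rightarrow> real) \<Rightarrow> 'b set \<Rightarrow> 'b set \<Rightarrow> bool" where
  "dense_wrt d T D \<longleftrightarrow> (\<forall>y\<in>T. \<forall>e>0. \<exists>x\<in>D. d y x < e)"

section \<open>The block metric\<close>

lemma block_dist_eq_L2_set: "block_dist r y z = L2_set (\<lambda>j. norm (y j - z j)) {..<r}"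
  unfolding block_dist_def L2_set_def by simp

lemma block_dist_commute: "block_dist r y z = block_dist r z y"
  by (simp add: block_dist_def norm_minus_commute)

lemma block_dist_triangle: "block_dist r x z \<le> block_dist r x y + block_dist r y z"
proof -
  have "block_dist r x z \<le> L2_set (\<lambda>j. norm (x j - y j) + norm (y j - z j)) {..<r}"
    unfolding block_dist_eq_L2_set by (rule L2_set_mono) (auto intro: norm_diff_triangle_le)
  also have "\<dots> \<le> block_dist r x y + block_dist r y z"
    unfolding block_dist_eq_L2_set by (rule L2_set_triangle_ineq)
  finally show ?thesis .
qed

lemma Metric_space_blocks: "Metric_space (blocks r) (block_dist r)"
proof
  fix x y :: "nat \<Rightarrow> 'a"
  show "0 \<le> block_dist r x y"
    by (simp add: block_dist_eq_L2_set)
  show "block_dist r x y = block_dist r y x"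
    by (rule block_dist_commute)
  assume "x \<in> blocks r" "y \<in> blocks r"
  then show "block_dist r x y = 0 \<longleftrightarrow> x = y"
    by (auto simp: block_dist_eq_L2_set L2_set_eq_0_iff blocks_def intro: PiE_ext)
qed (rule block_dist_triangle)

lemma norm_le_block_dist: "j < r \<Longrightarrow> norm (y j - z j) \<le> block_dist r y z"
  unfolding block_dist_eq_L2_set by (rule member_le_L2_set) auto

lemma borel_measurable_block_dist [measurable (raw)]:
  fixes f g :: "'w \<Rightarrow> nat \<Rightarrow> 'a::euclidean_space"
  assumes "\<And>j. j < r \<Longrightarrow> (\<lambda>w. f w j) \<in> borel_measurable M"
    and "\<And>j. j < r \<Longrightarrow> (\<lambda>w. g w j) \<in> borel_measurable M"
  shows "(\<lambda>w. block_dist r (f w) (g w)) \<in> borel_measurable M"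
  unfolding block_dist_def
  by (intro measurable_compose[OF _ borel_measurable_sqrt] borel_measurable_sum
      borel_measurable_power measurable_compose[OF _ borel_measurable_norm])
    (auto intro!: borel_measurable_diff assms)

lemma countable_dense_UNIV:
  obtains Q :: "'a::{metric_space, second_countable_topology} set"
  where "countable Q" "dense_wrt dist UNIV Q"
proof -
  obtain Q :: "'a set" where "countable Q" "\<And>U. open U \<Longrightarrow> U \<noteq> {} \<Longrightarrow> \<exists>q\<in>Q. q \<in> U"
    using countable_dense_setE by blast
  moreover have "\<exists>q\<in>Q. dist y q < e" if "e > 0" for y e
    using calculation(2)[of "ball y e"] that by auto
  ultimately show ?thesis
    using that by (auto simp: dense_wrt_def)
qed

lemma countable_dense_blocks:
  obtains Q :: "(nat \<Rightarrow> 'a::euclidean_space) set"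
  where "countable Q" "Q \<subseteq> blocks r" "dense_wrt (block_dist r) (blocks r) Q"
proof -
  obtain Q\<^sub>0 :: "'a set" where "countable Q\<^sub>0" and Q\<^sub>0: "dense_wrt dist UNIV Q\<^sub>0"
    by (rule countable_dense_UNIV)
  show ?thesis
  proof (rule that[of "PiE {..<r} (\<lambda>_. Q\<^sub>0)"])
    show "countable (PiE {..<r} (\<lambda>_. Q\<^sub>0))"
      using \<open>countable Q\<^sub>0\<close> by (intro countable_PiE) auto
    show "PiE {..<r} (\<lambda>_. Q\<^sub>0) \<subseteq> blocks r"
      by (auto simp: blocks_def)
    show "dense_wrt (block_dist r) (blocks r) (PiE {..<r} (\<lambda>_. Q\<^sub>0))"
      unfolding dense_wrt_def
    proof (intro ballI allI impI)
      fix y :: "nat \<Rightarrow> 'a" and e :: real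
      assume "e > 0"
      then have "\<forall>j. \<exists>q\<in>Q\<^sub>0. dist (y j) q < e / (real r + 1)"
        using Q\<^sub>0 by (auto simp: dense_wrt_def)
      then obtain q where q: "\<And>j. q j \<in> Q\<^sub>0" "\<And>j. dist (y j) (q j) < e / (real r + 1)"
        by metis
      have "block_dist r y (restrict q {..<r}) \<le> (\<Sum>j<r. norm (y j - q j))"
        unfolding block_dist_eq_L2_set by (rule order_trans[OF L2_set_le_sum]) auto
      also have "\<dots> \<le> (\<Sum>j<r. e / (real r + 1))"
        by (intro sum_mono less_imp_le) (use q in \<open>simp add: dist_norm\<close>)
      also have "\<dots> < e"
        using \<open>e > 0\<close> by (simp add: field_simps)
      finally show "\<exists>x\<in>PiE {..<r} (\<lambda>_. Q\<^sub>0). block_dist r y x < e"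
        using q(1) by (intro bexI[of _ "restrict q {..<r}"]) auto
    qed
  qed
qed

section \<open>Supports in separable metric spaces\<close>

definition outside_null_balls ::
    "'w measure \<Rightarrow> ('b \<Rightarrow> 'b \<Rightarrow> real) \<Rightarrow> 'b set \<Rightarrow> 'b set \<Rightarrow> ('w \<Rightarrow> 'b) \<Rightarrow> 'b set" where
  "outside_null_balls P d S Q Z =
     {z\<in>S. \<forall>q\<in>Q. \<forall>\<rho>\<in>\<rat>. (AE w in P. \<rho> \<le> d q (Z w)) \<longrightarrow> \<rho> \<le> d q z}"

lemma AE_in_outside_null_balls:
  assumes "countable Q" "\<And>w. w \<in> space P \<Longrightarrow> Z w \<in> S"
  shows "AE w in P. Z w \<in> outside_null_balls P d S Q Z"
proof -
  have "AE w in P. (AE w' in P. \<rho> \<le> d q (Z w')) \<longrightarrow> \<rho> \<le> d q (Z w)" for q \<rho>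
    by (cases "AE w' in P. \<rho> \<le> d q (Z w')") simp_all
  then have "AE w in P. \<forall>q\<in>Q. \<forall>\<rho>\<in>\<rat>. (AE w' in P. \<rho> \<le> d q (Z w')) \<longrightarrow> \<rho> \<le> d q (Z w)"
    by (simp add: AE_ball_countable assms(1) countable_rat)
  then show ?thesis
    using AE_space by eventually_elim (use assms(2) in \<open>simp add: outside_null_balls_def\<close>)
qed

lemma rv_support_subset:
  assumes "\<And>w. w \<in> space P \<Longrightarrow> Z w \<in> S"
  shows "rv_support P d S Z \<subseteq> S"
proof -
  have "S \<in> {C. closed_wrt d S C \<and> (AE w in P. Z w \<in> C)}"
    using assms by (simp add: closed_wrt_def)
  then show ?thesis
    unfolding rv_support_def by (rule Inter_lower)
qed

context Metric_space
begin

lemma dense_wrt_self: "T \<subseteq> M \<Longrightarrow> dense_wrt d T T"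
  unfolding dense_wrt_def by force

lemma countable_dense_subset:
  assumes "countable Q" "Q \<subseteq> M" "dense_wrt d T Q" "T \<subseteq> M"
  obtains D where "countable D" "D \<subseteq> T" "dense_wrt d T D"
proof -
  define I where "I = {(q, m::nat). q \<in> Q \<and> (\<exists>y\<in>T. d q y < 1 / Suc m)}"
  have "\<forall>p\<in>I. \<exists>y. y \<in> T \<and> d (fst p) y < 1 / Suc (snd p)"
    by (auto simp: I_def)
  then obtain f where f: "\<And>q m. (q, m) \<in> I \<Longrightarrow> f (q, m) \<in> T \<and> d q (f (q, m)) < 1 / Suc m"
    by (metis bchoice fst_conv snd_conv)
  show ?thesis
  proof (rule that[of "f ` I"])
    have "I \<subseteq> Q \<times> UNIV"
      by (auto simp: I_def)
    then have "countable I"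
      by (rule countable_subset) (simp add: assms(1))
    then show "countable (f ` I)"
      by (rule countable_image)
    show "f ` I \<subseteq> T"
      using f by auto
    show "dense_wrt d T (f ` I)"
      unfolding dense_wrt_def
    proof (intro ballI allI impI)
      fix y e assume y: "y \<in> T" and "(e::real) > 0"
      then obtain m :: nat where m: "1 / Suc m < e / 2"
        using reals_Archimedean[of "e / 2"] by (auto simp: inverse_eq_divide)
      have "1 / Suc m > 0"
        by simp
      then obtain q where q: "q \<in> Q" "d y q < 1 / Suc m"
        using assms(3) y unfolding dense_wrt_def by blast
      have I: "(q, m) \<in> I"
        unfolding I_def using q y commute[of y q] by force
      have "d y (f (q, m)) \<le> d y q + d q (f (q, m))"
        using f[OF I] y q assms by (intro triangle) auto
      also have "\<dots> < e"
        using f[OF I] q m by simp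
      finally show "\<exists>x\<in>f ` I. d y x < e"
        using I by blast
    qed
  qed
qed

lemma closed_outside_null_balls:
  assumes "Q \<subseteq> M"
  shows "closed_wrt d M (outside_null_balls P d M Q Z)"
  unfolding closed_wrt_def
proof (intro conjI subsetI ballI impI)
  fix z assume "z \<in> outside_null_balls P d M Q Z"
  then show "z \<in> M"
    by (simp add: outside_null_balls_def)
next
  fix z assume z: "z \<in> M" and approx: "\<forall>e>0. \<exists>y\<in>outside_null_balls P d M Q Z. d z y < e"
  show "z \<in> outside_null_balls P d M Q Z"
    unfolding outside_null_balls_def
  proof (intro CollectI conjI ballI impI z)
    fix q \<rho> assume q: "q \<in> Q" "\<rho> \<in> \<rat>" "AE w in P. \<rho> \<le> d q (Z w)"
    show "\<rho> \<le> d q z"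
    proof (rule field_le_epsilon)
      fix e :: real assume "e > 0"
      then obtain y where y: "y \<in> outside_null_balls P d M Q Z" "d z y < e"
        using approx by blast
      then have "\<rho> \<le> d q y" "y \<in> M"
        using q by (simp_all add: outside_null_balls_def)
      then have "\<rho> \<le> d q y"
        by simp
      also have "\<dots> \<le> d q z + d z y"
        using q(1) assms \<open>y \<in> M\<close> z by (intro triangle) auto
      finally show "\<rho> \<le> d q z + e"
        using y by simp
    qed
  qed
qed

lemma outside_null_balls_subset_rv_support:
  assumes "Q \<subseteq> M" "dense_wrt d M Q"
  shows "outside_null_balls P d M Q Z \<subseteq> rv_support P d M Z"
  unfolding rv_support_def
proof (intro subsetI InterI)
  fix z C assume z: "z \<in> outside_null_balls P d M Q Z"
    and "C \<in> {C. closed_wrt d M C \<and> (AE w in P. Z w \<in> C)}"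
  then have C: "closed_wrt d M C" "AE w in P. Z w \<in> C" and "z \<in> M" "C \<subseteq> M"
    by (simp_all add: closed_wrt_def outside_null_balls_def)
  show "z \<in> C"
  proof (rule ccontr)
    assume "z \<notin> C"
    then have "\<not> (\<forall>e>0. \<exists>y\<in>C. d z y < e)"
      using C(1) \<open>z \<in> M\<close> unfolding closed_wrt_def by blast
    then obtain e where e: "e > 0" "\<And>y. y \<in> C \<Longrightarrow> \<not> d z y < e"
      by blast
    then have "e / 3 > 0"
      by simp
    then obtain q where q: "q \<in> Q" "d z q < e / 3"
      using assms(2) \<open>z \<in> M\<close> unfolding dense_wrt_def by blast
    obtain \<rho> where \<rho>: "\<rho> \<in> \<rat>" "e / 3 < \<rho>" "\<rho> < 2 * e / 3"
      using Rats_dense_in_real[of "e / 3" "2 * e / 3"] e by auto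
    have "AE w in P. \<rho> \<le> d q (Z w)"
      using C(2)
    proof eventually_elim
      case (elim w)
      have "e \<le> d z (Z w)"
        using e(2)[OF elim] by simp
      also have "\<dots> \<le> d z q + d q (Z w)"
        using elim q \<open>z \<in> M\<close> \<open>C \<subseteq> M\<close> assms(1) by (intro triangle) auto
      finally show ?case
        using q \<rho> by simp
    qed
    then have "\<rho> \<le> d q z"
      using z q(1) \<rho>(1) by (simp add: outside_null_balls_def)
    then show False
      using q \<rho> commute[of q z] by simp
  qed
qed

lemma rv_support_eq_outside_null_balls:
  assumes "countable Q" "Q \<subseteq> M" "dense_wrt d M Q" "\<And>w. w \<in> space P \<Longrightarrow> Z w \<in> M"
  shows "rv_support P d M Z = outside_null_balls P d M Q Z"
proof
  show "rv_support P d M Z \<subseteq> outside_null_balls P d M Q Z"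
    unfolding rv_support_def
    using closed_outside_null_balls[OF assms(2)]
      AE_in_outside_null_balls[where P=P and Z=Z and d=d, OF assms(1,4)]
    by (intro Inter_lower) simp
  show "outside_null_balls P d M Q Z \<subseteq> rv_support P d M Z"
    by (rule outside_null_balls_subset_rv_support[OF assms(2,3)])
qed

lemma AE_in_rv_support:
  assumes "countable Q" "Q \<subseteq> M" "dense_wrt d M Q" "\<And>w. w \<in> space P \<Longrightarrow> Z w \<in> M"
  shows "AE w in P. Z w \<in> rv_support P d M Z"
proof -
  have "rv_support P d M Z = outside_null_balls P d M Q Z"
    by (rule rv_support_eq_outside_null_balls[OF assms])
  then show ?thesis
    using AE_in_outside_null_balls[where P=P and Z=Z and d=d, OF assms(1,4)] by simp
qed

lemma rv_support_distr_eq: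
  assumes "countable Q" "Q \<subseteq> M" "dense_wrt d M Q"
    and "Z \<in> measurable P N" "Z' \<in> measurable P N" "distr P N Z = distr P N Z'"
    and balls: "\<And>q \<rho>. q \<in> Q \<Longrightarrow> {z \<in> space N. \<rho> \<le> d q z} \<in> sets N"
    and "\<And>w. w \<in> space P \<Longrightarrow> Z w \<in> M" "\<And>w. w \<in> space P \<Longrightarrow> Z' w \<in> M"
  shows "rv_support P d M Z = rv_support P d M Z'"
proof -
  have "(AE w in P. \<rho> \<le> d q (Z w)) \<longleftrightarrow> (AE w in P. \<rho> \<le> d q (Z' w))" if "q \<in> Q" for q \<rho>
  proof -
    have "(AE w in P. \<rho> \<le> d q (Z w)) \<longleftrightarrow> (AE z in distr P N Z. \<rho> \<le> d q z)"
      by (rule AE_distr_iff[OF assms(4) balls[OF that], symmetric])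
    also have "\<dots> \<longleftrightarrow> (AE w in P. \<rho> \<le> d q (Z' w))"
      unfolding assms(6) by (rule AE_distr_iff[OF assms(5) balls[OF that]])
    finally show ?thesis .
  qed
  then show ?thesis
    by (simp add: rv_support_eq_outside_null_balls[where Z=Z, OF assms(1-3,8)]
        rv_support_eq_outside_null_balls[where Z=Z', OF assms(1-3,9)] outside_null_balls_def)
qed

end

lemma closed_wrt_dist_iff: "closed_wrt dist UNIV C \<longleftrightarrow> closed C"
proof -
  have "closed_wrt dist UNIV C \<longleftrightarrow> closure C \<subseteq> C"
    unfolding closed_wrt_def subset_iff closure_approachable by (simp add: dist_commute)
  then show ?thesis
    by (simp add: closure_subset_eq)
qed

lemma rv_support_subset_closure:
  fixes Z :: "'w \<Rightarrow> 'a::metric_space"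
  assumes "AE w in P. Z w \<in> A"
  shows "rv_support P dist UNIV Z \<subseteq> closure A"
proof -
  have "AE w in P. Z w \<in> closure A"
    using assms by eventually_elim (rule closure_subset[THEN subsetD])
  then have "closure A \<in> {C. closed_wrt dist UNIV C \<and> (AE w in P. Z w \<in> C)}"
    by (simp add: closed_wrt_dist_iff)
  then show ?thesis
    unfolding rv_support_def by (rule Inter_lower)
qed

section \<open>Hausdorff distance to a separable set\<close>

lemma less_INF_finite_iff:
  assumes "finite A"
  shows "ereal c < (INF a\<in>A. ereal (f a)) \<longleftrightarrow> (\<forall>a\<in>A. c < f a)"
proof (cases "A = {}")
  case False
  then show ?thesis
    using finite_less_Inf_iff[of "(\<lambda>a. ereal (f a)) ` A" "ereal c"] assms by simp
qed (simp add: top_ereal_def)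

lemma less_hausdorff_dist_iff:
  assumes "finite A"
  shows "ereal \<epsilon> < hausdorff_dist d A B \<longleftrightarrow>
    (\<exists>a\<in>A. ereal \<epsilon> < (INF b\<in>B. ereal (d a b))) \<or> (\<exists>b\<in>B. \<forall>a\<in>A. \<epsilon> < d b a)"
  unfolding hausdorff_dist_def less_max_iff_disj less_SUP_iff
  by (simp add: less_INF_finite_iff[OF assms])

lemma borel_measurable_hausdorff_dist:
  assumes "countable I" "countable D"
    and "\<And>i b. i \<in> I \<Longrightarrow> b \<in> D \<Longrightarrow> (\<lambda>w. d (Z i w) b) \<in> borel_measurable M"
    and "\<And>i b. i \<in> I \<Longrightarrow> b \<in> D \<Longrightarrow> (\<lambda>w. d b (Z i w)) \<in> borel_measurable M"
  shows "(\<lambda>w. hausdorff_dist d ((\<lambda>i. Z i w) ` I) D) \<in> borel_measurable M"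
proof -
  have "hausdorff_dist d ((\<lambda>i. Z i w) ` I) D =
      max (SUP i\<in>I. INF b\<in>D. ereal (d (Z i w) b)) (SUP b\<in>D. INF i\<in>I. ereal (d b (Z i w)))" for w
    by (simp add: hausdorff_dist_def image_comp)
  then show ?thesis
    by (simp only:) (intro borel_measurable_max borel_measurable_SUP borel_measurable_INF
        borel_measurable_ereal assms)
qed

context Metric_space
begin

lemma INF_dense_subset_eq:
  assumes "a \<in> M" "B \<subseteq> M" "D \<subseteq> B" "dense_wrt d B D"
  shows "(INF b\<in>D. ereal (d a b)) = (INF b\<in>B. ereal (d a b))"
proof (rule antisym)
  show "(INF b\<in>D. ereal (d a b)) \<le> (INF b\<in>B. ereal (d a b))"
  proof (rule INF_greatest)
    fix b assume "b \<in> B"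
    show "(INF b\<in>D. ereal (d a b)) \<le> ereal (d a b)"
    proof (rule ereal_le_epsilon2)
      fix e :: real assume "e > 0"
      then obtain b' where b': "b' \<in> D" "d b b' < e"
        using assms(4) \<open>b \<in> B\<close> unfolding dense_wrt_def by blast
      have "b \<in> M" "b' \<in> M"
        using assms \<open>b \<in> B\<close> b' by auto
      have "(INF b\<in>D. ereal (d a b)) \<le> ereal (d a b')"
        using b' by (intro INF_lower)
      also have "\<dots> \<le> ereal (d a b + d b b')"
        using triangle[of a b b'] assms(1) \<open>b \<in> M\<close> \<open>b' \<in> M\<close> by simp
      also have "\<dots> \<le> ereal (d a b) + ereal e"
        using b' by simp
      finally show "(INF b\<in>D. ereal (d a b)) \<le> ereal (d a b) + ereal e" .
    qed
  qed
next
  show "(INF b\<in>B. ereal (d a b)) \<le> (INF b\<in>D. ereal (d a b))"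
    by (rule INF_superset_mono[OF assms(3)]) simp
qed

lemma INF_le_INF_add:
  assumes "b \<in> M" "b' \<in> M" "A \<subseteq> M"
  shows "(INF a\<in>A. ereal (d b a)) \<le> (INF a\<in>A. ereal (d b' a)) + ereal (d b b')"
proof (cases "A = {}")
  case False
  have "(INF a\<in>A. ereal (d b a)) \<le> (INF a\<in>A. ereal (d b' a) + ereal (d b b'))"
  proof (rule INF_greatest)
    fix a assume "a \<in> A"
    then have "ereal (d b a) \<le> ereal (d b' a) + ereal (d b b')"
      using triangle[of b b' a] assms by auto
    with \<open>a \<in> A\<close> show "(INF a\<in>A. ereal (d b a)) \<le> ereal (d b' a) + ereal (d b b')"
      by (blast intro: INF_lower2)
  qed
  also have "\<dots> = (INF a\<in>A. ereal (d b' a)) + ereal (d b b')"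
    using False by (intro INF_ereal_add_left) auto
  finally show ?thesis .
qed (simp add: top_ereal_def)

lemma SUP_INF_dense_subset_eq:
  assumes "A \<subseteq> M" "B \<subseteq> M" "D \<subseteq> B" "dense_wrt d B D"
  shows "(SUP b\<in>D. INF a\<in>A. ereal (d b a)) = (SUP b\<in>B. INF a\<in>A. ereal (d b a))"
proof (rule antisym)
  show "(SUP b\<in>B. INF a\<in>A. ereal (d b a)) \<le> (SUP b\<in>D. INF a\<in>A. ereal (d b a))"
  proof (rule SUP_least)
    fix b assume "b \<in> B"
    show "(INF a\<in>A. ereal (d b a)) \<le> (SUP b\<in>D. INF a\<in>A. ereal (d b a))"
    proof (rule ereal_le_epsilon2)
      fix e :: real assume "e > 0"
      then obtain b' where b': "b' \<in> D" "d b b' < e"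
        using assms(4) \<open>b \<in> B\<close> unfolding dense_wrt_def by blast
      have "(INF a\<in>A. ereal (d b a)) \<le> (INF a\<in>A. ereal (d b' a)) + ereal (d b b')"
        using assms \<open>b \<in> B\<close> b' by (intro INF_le_INF_add) auto
      also have "\<dots> \<le> (SUP b\<in>D. INF a\<in>A. ereal (d b a)) + ereal e"
        using b' by (intro add_mono SUP_upper) auto
      finally show "(INF a\<in>A. ereal (d b a)) \<le> (SUP b\<in>D. INF a\<in>A. ereal (d b a)) + ereal e" .
    qed
  qed
next
  show "(SUP b\<in>D. INF a\<in>A. ereal (d b a)) \<le> (SUP b\<in>B. INF a\<in>A. ereal (d b a))"
    by (rule SUP_subset_mono[OF assms(3)]) simp
qed

lemma hausdorff_dist_dense_subset:
  assumes "A \<subseteq> M" "B \<subseteq> M" "D \<subseteq> B" "dense_wrt d B D"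
  shows "hausdorff_dist d A D = hausdorff_dist d A B"
proof -
  have "(SUP a\<in>A. INF b\<in>D. ereal (d a b)) = (SUP a\<in>A. INF b\<in>B. ereal (d a b))"
    using assms by (intro SUP_cong INF_dense_subset_eq) auto
  then show ?thesis
    unfolding hausdorff_dist_def SUP_INF_dense_subset_eq[OF assms] by simp
qed

lemma less_hausdorff_dist_iff_dense:
  assumes "finite A" "A \<subseteq> B" "B \<subseteq> M" "D \<subseteq> B" "dense_wrt d B D" "0 \<le> \<epsilon>"
  shows "ereal \<epsilon> < hausdorff_dist d A B \<longleftrightarrow> (\<exists>b\<in>D. \<forall>a\<in>A. \<epsilon> < d b a)"
proof -
  have INF_le: "(INF b\<in>D. ereal (d a b)) \<le> ereal \<epsilon>" if "a \<in> A" for a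
  proof -
    have "(INF b\<in>D. ereal (d a b)) = (INF b\<in>B. ereal (d a b))"
      using assms that by (intro INF_dense_subset_eq) auto
    also have "\<dots> \<le> ereal (d a a)"
      using assms that by (intro INF_lower) auto
    also have "\<dots> \<le> ereal \<epsilon>"
      using assms that by auto
    finally show ?thesis .
  qed
  have "ereal \<epsilon> < hausdorff_dist d A B \<longleftrightarrow> ereal \<epsilon> < hausdorff_dist d A D"
    using assms hausdorff_dist_dense_subset[of A B D] by auto
  also have "\<dots> \<longleftrightarrow> (\<exists>a\<in>A. ereal \<epsilon> < (INF b\<in>D. ereal (d a b))) \<or> (\<exists>b\<in>D. \<forall>a\<in>A. \<epsilon> < d b a)"
    by (rule less_hausdorff_dist_iff[OF assms(1)])
  also have "\<dots> \<longleftrightarrow> (\<exists>b\<in>D. \<forall>a\<in>A. \<epsilon> < d b a)"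
    using INF_le leD by blast
  finally show ?thesis .
qed

end

section \<open>Stationarity and sections of product events\<close>

lemma stationary_distr_eq:
  assumes "stationary M X" "\<And>i. X i \<in> borel_measurable M" "1 \<le> t"
  shows "distr M borel (X t) = distr M borel (X 1)"
proof -
  define W where "W s = (\<lambda>w. \<lambda>j\<in>{..<1::nat}. X (s + j) w)" for s
  have W: "W s \<in> measurable M (\<Pi>\<^sub>M j\<in>{..<1}. borel)" for s
    unfolding W_def using assms(2) by measurable
  have X: "X s = (\<lambda>f. f 0) \<circ> W s" for s
    by (auto simp: W_def)
  have "distr M (\<Pi>\<^sub>M j\<in>{..<1}. borel) (W 1) = distr M (\<Pi>\<^sub>M j\<in>{..<1}. borel) (W (1 + (t - 1)))"
    using assms(1) unfolding stationary_def W_def by blast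
  then show ?thesis
    unfolding X using assms(3) by (simp add: distr_distr[OF measurable_component_singleton W, symmetric])
qed

lemma (in prob_space) prob_mult_le_of_sections:
  assumes F: "F \<in> sets (M \<Otimes>\<^sub>M M)" and A: "A \<in> events" and "0 \<le> a"
    and lower: "\<And>w. w \<in> A \<Longrightarrow> a \<le> prob (Pair w -` F)"
    and upper: "AE w' in M. prob ((\<lambda>w. (w, w')) -` F) \<le> b"
  shows "a * prob A \<le> b"
proof -
  interpret PS: pair_sigma_finite M M ..
  have "AE w' in M. 0 \<le> b"
    using upper by eventually_elim (rule order_trans[OF measure_nonneg])
  then have "0 \<le> b"
    by simp
  have "ennreal a * emeasure M A = (\<integral>\<^sup>+ w. ennreal a * indicator A w \<partial>M)"
    using A by (simp add: nn_integral_cmult_indicator)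
  also have "\<dots> \<le> (\<integral>\<^sup>+ w. emeasure M (Pair w -` F) \<partial>M)"
    by (intro nn_integral_mono)
      (auto split: split_indicator simp: emeasure_eq_measure intro: ennreal_leI lower)
  also have "\<dots> = emeasure (M \<Otimes>\<^sub>M M) F"
    by (rule emeasure_pair_measure_alt[OF F, symmetric])
  also have "\<dots> = (\<integral>\<^sup>+ w'. emeasure M ((\<lambda>w. (w, w')) -` F) \<partial>M)"
    by (rule PS.emeasure_pair_measure_alt2[OF F])
  also have "\<dots> \<le> (\<integral>\<^sup>+ w'. ennreal b \<partial>M)"
    using upper by (intro nn_integral_mono_AE)
      (auto simp: emeasure_eq_measure intro: ennreal_leI elim!: AE_mp)
  also have "\<dots> = ennreal b"
    by (simp add: emeasure_space_1)
  finally show ?thesis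
    using \<open>0 \<le> a\<close> \<open>0 \<le> b\<close> by (simp add: emeasure_eq_measure ennreal_mult'[symmetric])
qed

section \<open>Blocks of a stationary process\<close>

definition block :: "nat \<Rightarrow> (nat \<Rightarrow> 'w \<Rightarrow> 'a) \<Rightarrow> nat \<Rightarrow> 'w \<Rightarrow> nat \<Rightarrow> 'a" where
  "block r X i w = (\<lambda>j\<in>{..<r}. X ((i - 1) * r + 1 + j) w)"

lemma block_in_blocks: "block r X i w \<in> blocks r"
  by (simp add: block_def blocks_def)

lemma block_apply [simp]: "j < r \<Longrightarrow> block r X i w j = X ((i - 1) * r + 1 + j) w"
  by (simp add: block_def)

lemma first_index_of_block:
  fixes i k r n :: nat
  assumes "i \<in> {1..k}" "1 \<le> r" "k * r \<le> n"
  shows "(i - 1) * r + 1 \<in> {1..n}"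
proof -
  have "(i - 1) * r < k * r"
    using assms(1,2) by (intro mult_strict_right_mono) auto
  then show ?thesis
    using assms(3) unfolding atLeastAtMost_iff by linarith
qed

locale stationary_process = prob_space M for M :: "'w measure" +
  fixes X :: "nat \<Rightarrow> 'w \<Rightarrow> 'a::euclidean_space"
  assumes measurable_X [measurable]: "\<And>i. X i \<in> borel_measurable M"
    and stationary: "stationary M X"
begin

abbreviation block_support :: "nat \<Rightarrow> (nat \<Rightarrow> 'a) set" where
  "block_support r \<equiv> rv_support M (block_dist r) (blocks r) (block r X 1)"

lemma measurable_block [measurable]: "block r X i \<in> measurable M (\<Pi>\<^sub>M j\<in>{..<r}. borel)"
  unfolding block_def by measurable

lemma distr_block_eq:
  assumes "1 \<le> i"
  shows "distr M (\<Pi>\<^sub>M j\<in>{..<r}. borel) (block r X i) = distr M (\<Pi>\<^sub>M j\<in>{..<r}. borel) (block r X 1)"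
proof -
  have "block r X i = (\<lambda>w. \<lambda>j\<in>{..<r}. X (1 + (i - 1) * r + j) w)"
       "block r X 1 = (\<lambda>w. \<lambda>j\<in>{..<r}. X (1 + j) w)"
    by (auto simp: block_def add_ac)
  then show ?thesis
    using stationary unfolding stationary_def by (metis order_refl)
qed

lemma AE_block_in_block_support:
  assumes "1 \<le> i"
  shows "AE w in M. block r X i w \<in> block_support r"
proof -
  interpret B: Metric_space "blocks r" "block_dist r"
    by (rule Metric_space_blocks)
  obtain Q :: "(nat \<Rightarrow> 'a) set"
    where Q: "countable Q" "Q \<subseteq> blocks r" "dense_wrt (block_dist r) (blocks r) Q"
    by (rule countable_dense_blocks)
  have "{z \<in> space (\<Pi>\<^sub>M j\<in>{..<r}. borel). \<rho> \<le> block_dist r q z} \<in> sets (\<Pi>\<^sub>M j\<in>{..<r}. borel)"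
    for q :: "nat \<Rightarrow> 'a" and \<rho>
    by measurable
  then have "block_support r = rv_support M (block_dist r) (blocks r) (block r X i)"
    using Q distr_block_eq[OF assms] block_in_blocks
    by (intro B.rv_support_distr_eq[where N="\<Pi>\<^sub>M j\<in>{..<r}. borel"] measurable_block) auto
  then show ?thesis
    using Q by (simp add: B.AE_in_rv_support block_in_blocks)
qed

lemma AE_in_support:
  assumes "1 \<le> j"
  shows "AE w in M. X j w \<in> rv_support M dist UNIV (X 1)"
proof -
  obtain Q :: "'a set" where Q: "countable Q" "dense_wrt dist UNIV Q"
    by (rule countable_dense_UNIV)
  have "rv_support M dist UNIV (X 1) = rv_support M dist UNIV (X j)"
    using Q stationary_distr_eq[OF stationary measurable_X assms]
    by (intro Met_TC.rv_support_distr_eq[where N=borel]) auto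
  then show ?thesis
    using Q by (simp add: Met_TC.AE_in_rv_support)
qed

lemma block_support_subset: "block_support r \<subseteq> blocks r"
  by (rule rv_support_subset) (simp add: block_in_blocks)

lemma support_subset_closure_block_support:
  assumes "1 \<le> r"
  shows "rv_support M dist UNIV (X 1) \<subseteq> closure ((\<lambda>y. y 0) ` block_support r)"
proof (rule rv_support_subset_closure)
  show "AE w in M. X 1 w \<in> (\<lambda>y. y 0) ` block_support r"
    using AE_block_in_block_support[OF order_refl, of r]
  proof eventually_elim
    case (elim w)
    have "X 1 w = block r X 1 w 0"
      using assms by simp
    then show ?case
      using elim by (rule image_eqI)
  qed
qed

lemma countable_dense_block_support:
  obtains D where "countable D" "D \<subseteq> block_support r" "dense_wrt (block_dist r) (block_support r) D"
proof -
  obtain Q :: "(nat \<Rightarrow> 'a) set"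
    where "countable Q" "Q \<subseteq> blocks r" "dense_wrt (block_dist r) (blocks r) Q"
    by (rule countable_dense_blocks)
  then have "dense_wrt (block_dist r) (block_support r) Q"
    using block_support_subset[of r] unfolding dense_wrt_def by blast
  with \<open>countable Q\<close> \<open>Q \<subseteq> blocks r\<close> show ?thesis
    by (rule Metric_space.countable_dense_subset[OF Metric_space_blocks _ _ _ block_support_subset])
      (rule that)
qed

lemma sets_less_hausdorff_dist_blocks:
  assumes "finite I"
  shows "{w\<in>space M. ereal \<epsilon> < hausdorff_dist (block_dist r) ((\<lambda>i. block r X i w) ` I) (block_support r)}
    \<in> events"
proof -
  obtain D where D: "countable D" "D \<subseteq> block_support r" "dense_wrt (block_dist r) (block_support r) D"
    by (rule countable_dense_block_support)
  have "hausdorff_dist (block_dist r) ((\<lambda>i. block r X i w) ` I) (block_support r)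
      = hausdorff_dist (block_dist r) ((\<lambda>i. block r X i w) ` I) D" for w
    using D block_support_subset block_in_blocks
    by (intro Metric_space.hausdorff_dist_dense_subset[OF Metric_space_blocks, symmetric]) auto
  moreover have "(\<lambda>w. hausdorff_dist (block_dist r) ((\<lambda>i. block r X i w) ` I) D) \<in> borel_measurable M"
    using assms D(1) by (intro borel_measurable_hausdorff_dist) auto
  ultimately show ?thesis
    by simp
qed

lemma sets_far_from_blocks:
  assumes "countable D" "finite I"
  shows "{w\<in>space M. \<exists>x\<in>D. \<forall>i\<in>I. \<epsilon> < block_dist r x (block r X i w)} \<in> events"
  using assms by (intro sets.sets_Collect_countable_Ex') measurable

lemma exists_far_point_in_block_support:
  assumes "1 \<le> r" "finite J" "x \<in> rv_support M dist UNIV (X 1)" "\<forall>j\<in>J. \<epsilon> < dist x (X j w)"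
  shows "\<exists>y\<in>block_support r. \<forall>j\<in>J. \<epsilon> < dist (y 0) (X j w)"
proof -
  let ?U = "\<Inter>j\<in>J. {z. \<epsilon> < dist z (X j w)}"
  have "open ?U"
    using assms(2) by (intro open_INT ballI open_Collect_less continuous_intros) auto
  moreover have "x \<in> ?U"
    using assms(4) by simp
  moreover have "x \<in> closure ((\<lambda>y. y 0) ` block_support r)"
    using support_subset_closure_block_support[OF assms(1)] assms(3) ..
  ultimately have "?U \<inter> (\<lambda>y. y 0) ` block_support r \<noteq> {}"
    using open_Int_closure_eq_empty by blast
  then obtain y where "y \<in> block_support r" "y 0 \<in> ?U"
    by blast
  then show ?thesis
    by auto
qed

lemma prob_hausdorff_le_prob_block_hausdorff:
  assumes "1 \<le> r" "k * r \<le> n" "0 \<le> \<epsilon>"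
  shows "prob {w\<in>space M. hausdorff_dist dist ((\<lambda>i. X i w) ` {1..n}) (rv_support M dist UNIV (X 1)) > ereal \<epsilon>}
    \<le> prob {w\<in>space M. hausdorff_dist (block_dist r) ((\<lambda>i. block r X i w) ` {1..k}) (block_support r) > ereal \<epsilon>}"
proof (rule finite_measure_mono_AE)
  have "AE w in M. \<forall>j\<in>{1..n}. X j w \<in> rv_support M dist UNIV (X 1)"
    by (intro eventually_ball_finite ballI AE_in_support) auto
  then show "AE w in M. w \<in> {w\<in>space M. hausdorff_dist dist ((\<lambda>i. X i w) ` {1..n}) (rv_support M dist UNIV (X 1)) > ereal \<epsilon>}
      \<longrightarrow> w \<in> {w\<in>space M. hausdorff_dist (block_dist r) ((\<lambda>i. block r X i w) ` {1..k}) (block_support r) > ereal \<epsilon>}"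
  proof (eventually_elim, clarify)
    fix w assume X_in: "\<forall>j\<in>{1..n}. X j w \<in> rv_support M dist UNIV (X 1)"
      and "ereal \<epsilon> < hausdorff_dist dist ((\<lambda>i. X i w) ` {1..n}) (rv_support M dist UNIV (X 1))"
    moreover have "ereal \<epsilon> < hausdorff_dist dist ((\<lambda>i. X i w) ` {1..n}) (rv_support M dist UNIV (X 1))
        \<longleftrightarrow> (\<exists>x\<in>rv_support M dist UNIV (X 1). \<forall>a\<in>(\<lambda>i. X i w) ` {1..n}. \<epsilon> < dist x a)"
      using X_in assms(3)
      by (intro Met_TC.less_hausdorff_dist_iff_dense[OF _ _ _ order_refl Met_TC.dense_wrt_self]) auto
    ultimately obtain x where "x \<in> rv_support M dist UNIV (X 1)" "\<forall>j\<in>{1..n}. \<epsilon> < dist x (X j w)"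
      by auto
    then obtain y where y: "y \<in> block_support r" "\<forall>j\<in>{1..n}. \<epsilon> < dist (y 0) (X j w)"
      using exists_far_point_in_block_support[OF assms(1)] by blast
    have "\<epsilon> < block_dist r y (block r X i w)" if "i \<in> {1..k}" for i
    proof -
      have "\<epsilon> < norm (y 0 - block r X i w 0)"
        using y(2) first_index_of_block[OF that assms(1,2)] assms(1) by (simp add: dist_norm)
      also have "\<dots> \<le> block_dist r y (block r X i w)"
        using assms(1) by (intro norm_le_block_dist) simp
      finally show ?thesis .
    qed
    with y(1) have "\<exists>b\<in>block_support r. \<forall>a\<in>(\<lambda>i. block r X i w) ` {1..k}. \<epsilon> < block_dist r b a"
      by blast
    then show "ereal \<epsilon> < hausdorff_dist (block_dist r) ((\<lambda>i. block r X i w) ` {1..k}) (block_support r)"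
      unfolding less_hausdorff_dist_iff[OF finite_imageI[OF finite_atLeastAtMost]] by blast
  qed
qed (rule sets_less_hausdorff_dist_blocks, simp)

lemma prob_blocks_far_from_first_block_ge:
  assumes "0 \<le> \<epsilon>" "x \<in> block_support r" "\<forall>i\<in>I. \<epsilon> < block_dist r x (block r X i w)"
  shows "1 - (SUP x\<in>block_support r. prob {w\<in>space M. block_dist r (block r X 1 w) x > \<epsilon> / 4})
    \<le> prob {w'\<in>space M. \<forall>i\<in>I. \<epsilon> / 2 < block_dist r (block r X i w) (block r X 1 w')}"
proof -
  have "{w'\<in>space M. \<not> \<epsilon> / 4 < block_dist r (block r X 1 w') x}
      \<subseteq> {w'\<in>space M. \<forall>i\<in>I. \<epsilon> / 2 < block_dist r (block r X i w) (block r X 1 w')}"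
  proof
    fix w' assume "w' \<in> {w'\<in>space M. \<not> \<epsilon> / 4 < block_dist r (block r X 1 w') x}"
    then have w': "w' \<in> space M" "block_dist r (block r X 1 w') x \<le> \<epsilon> / 4"
      by simp_all
    have "\<epsilon> / 2 < block_dist r (block r X i w) (block r X 1 w')" if "i \<in> I" for i
    proof -
      have "\<epsilon> < block_dist r x (block r X i w)"
        using assms(3) that by blast
      also have "\<dots> \<le> block_dist r (block r X 1 w') x + block_dist r (block r X i w) (block r X 1 w')"
        using block_dist_triangle[of r x "block r X i w" "block r X 1 w'"]
        unfolding block_dist_commute[of r x "block r X 1 w'"]
          block_dist_commute[of r "block r X 1 w'" "block r X i w"] .
      finally show ?thesis
        using w'(2) assms(1) by linarith
    qed
    with w'(1) show "w' \<in> {w'\<in>space M. \<forall>i\<in>I. \<epsilon> / 2 < block_dist r (block r X i w) (block r X 1 w')}"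
      by simp
  qed
  then have "prob {w'\<in>space M. \<not> \<epsilon> / 4 < block_dist r (block r X 1 w') x}
      \<le> prob {w'\<in>space M. \<forall>i\<in>I. \<epsilon> / 2 < block_dist r (block r X i w) (block r X 1 w')}"
    by (intro finite_measure_mono) measurable
  moreover have "prob {w'\<in>space M. \<not> \<epsilon> / 4 < block_dist r (block r X 1 w') x}
      = 1 - prob {w'\<in>space M. \<epsilon> / 4 < block_dist r (block r X 1 w') x}"
    by (intro prob_neg) measurable
  moreover have "prob {w'\<in>space M. \<epsilon> / 4 < block_dist r (block r X 1 w') x}
      \<le> (SUP x\<in>block_support r. prob {w\<in>space M. block_dist r (block r X 1 w) x > \<epsilon> / 4})"
    using assms(2) by (intro cSUP_upper bdd_aboveI2[where M=1]) auto
  ultimately show ?thesis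
    by linarith
qed

lemma prob_far_from_blocks_le:
  assumes "1 \<le> k" "0 \<le> \<epsilon>" "countable D" "D \<subseteq> block_support r"
    and s_le: "(SUP x\<in>block_support r. prob {w\<in>space M. block_dist r (block r X 1 w) x > \<epsilon> / 4}) \<le> 1"
  shows "(1 - (SUP x\<in>block_support r. prob {w\<in>space M. block_dist r (block r X 1 w) x > \<epsilon> / 4}))
      * prob {w\<in>space M. \<exists>x\<in>D. \<forall>i\<in>{1..k}. \<epsilon> < block_dist r x (block r X i w)}
    \<le> (SUP x\<in>block_support r. prob {w\<in>space M. Min ((\<lambda>i. block_dist r (block r X i w) x) ` {1..k}) > \<epsilon> / 2})"
    (is "(1 - ?s) * prob ?A \<le> ?S")
proof -
  have Min_gr_iff_all: "\<epsilon> / 2 < Min ((\<lambda>i. block_dist r (block r X i w) y) ` {1..k})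
      \<longleftrightarrow> (\<forall>i\<in>{1..k}. \<epsilon> / 2 < block_dist r (block r X i w) y)" for w y
    using assms(1) by (subst Min_gr_iff) auto
  \<comment> \<open>The second coordinate of \<open>F\<close> carries the independent copy of the first block.\<close>
  define F where "F = {p\<in>space (M \<Otimes>\<^sub>M M).
    \<forall>i\<in>{1..k}. \<epsilon> / 2 < block_dist r (block r X i (fst p)) (block r X 1 (snd p))}"
  have F: "F \<in> sets (M \<Otimes>\<^sub>M M)"
    unfolding F_def by measurable
  show ?thesis
  proof (rule prob_mult_le_of_sections[OF F sets_far_from_blocks[OF assms(3) finite_atLeastAtMost]])
    show "0 \<le> 1 - ?s"
      using s_le by simp
  next
    fix w assume "w \<in> ?A"
    then obtain x where w: "w \<in> space M" and x: "x \<in> D" "\<forall>i\<in>{1..k}. \<epsilon> < block_dist r x (block r X i w)"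
      by blast
    have "Pair w -` F = {w'\<in>space M. \<forall>i\<in>{1..k}. \<epsilon> / 2 < block_dist r (block r X i w) (block r X 1 w')}"
      using w by (auto simp: F_def space_pair_measure)
    then show "1 - ?s \<le> prob (Pair w -` F)"
      using prob_blocks_far_from_first_block_ge[OF assms(2) _ x(2)] x(1) assms(4) by auto
  next
    have S_ge: "prob {w\<in>space M. Min ((\<lambda>i. block_dist r (block r X i w) y) ` {1..k}) > \<epsilon> / 2} \<le> ?S"
      if "y \<in> block_support r" for y
      using that by (intro cSUP_upper bdd_aboveI2[where M=1]) auto
    show "AE w' in M. prob ((\<lambda>w. (w, w')) -` F) \<le> ?S"
      using AE_block_in_block_support[OF order_refl, of r] AE_space
    proof eventually_elim
      case (elim w')
      have "(\<lambda>w. (w, w')) -` F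
          = {w\<in>space M. \<forall>i\<in>{1..k}. \<epsilon> / 2 < block_dist r (block r X i w) (block r X 1 w')}"
        using elim(2) by (auto simp: F_def space_pair_measure)
      also have "\<dots> = {w\<in>space M. Min ((\<lambda>i. block_dist r (block r X i w) (block r X 1 w')) ` {1..k}) > \<epsilon> / 2}"
        by (simp only: Min_gr_iff_all)
      finally show ?case
        using S_ge[OF elim(1)] by simp
    qed
  qed
qed

lemma prob_block_hausdorff_le:
  assumes "1 \<le> k" "0 \<le> \<epsilon>"
    and s_lt: "(SUP x\<in>block_support r. prob {w\<in>space M. block_dist r (block r X 1 w) x > \<epsilon> / 4}) < 1"
  shows "prob {w\<in>space M. hausdorff_dist (block_dist r) ((\<lambda>i. block r X i w) ` {1..k}) (block_support r) > ereal \<epsilon>}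
    \<le> (SUP x\<in>block_support r. prob {w\<in>space M. Min ((\<lambda>i. block_dist r (block r X i w) x) ` {1..k}) > \<epsilon> / 2})
      / (1 - (SUP x\<in>block_support r. prob {w\<in>space M. block_dist r (block r X 1 w) x > \<epsilon> / 4}))"
proof -
  interpret B: Metric_space "blocks r" "block_dist r"
    by (rule Metric_space_blocks)
  obtain D where D: "countable D" "D \<subseteq> block_support r" "dense_wrt (block_dist r) (block_support r) D"
    by (rule countable_dense_block_support)
  have "AE w in M. \<forall>i\<in>{1..k}. block r X i w \<in> block_support r"
    by (intro eventually_ball_finite ballI AE_block_in_block_support) auto
  then have "AE w in M. ereal \<epsilon> < hausdorff_dist (block_dist r) ((\<lambda>i. block r X i w) ` {1..k}) (block_support r)
      \<longrightarrow> (\<exists>x\<in>D. \<forall>i\<in>{1..k}. \<epsilon> < block_dist r x (block r X i w))"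
  proof eventually_elim
    case (elim w)
    have "ereal \<epsilon> < hausdorff_dist (block_dist r) ((\<lambda>i. block r X i w) ` {1..k}) (block_support r)
        \<longleftrightarrow> (\<exists>x\<in>D. \<forall>a\<in>(\<lambda>i. block r X i w) ` {1..k}. \<epsilon> < block_dist r x a)"
      using elim D assms(2) block_support_subset[of r] by (intro B.less_hausdorff_dist_iff_dense) auto
    then show ?case
      by auto
  qed
  then have "prob {w\<in>space M. hausdorff_dist (block_dist r) ((\<lambda>i. block r X i w) ` {1..k}) (block_support r) > ereal \<epsilon>}
      \<le> prob {w\<in>space M. \<exists>x\<in>D. \<forall>i\<in>{1..k}. \<epsilon> < block_dist r x (block r X i w)}"
    by (intro finite_measure_mono_AE sets_far_from_blocks D(1)) auto
  also have "\<dots> \<le> (SUP x\<in>block_support r. prob {w\<in>space M. Min ((\<lambda>i. block_dist r (block r X i w) x) ` {1..k}) > \<epsilon> / 2})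
      / (1 - (SUP x\<in>block_support r. prob {w\<in>space M. block_dist r (block r X 1 w) x > \<epsilon> / 4}))"
    using prob_far_from_blocks_le[OF assms(1,2) D(1,2)] s_lt by (simp add: pos_le_divide_eq mult.commute)
  finally show ?thesis .
qed

end

theorem proposition3p1:
  fixes M :: "'w measure" and X :: "nat \<Rightarrow> 'w \<Rightarrow> 'a::euclidean_space"
    and MM :: "'a set" and n k r :: nat and \<epsilon> :: real
  assumes "prob_space M"
    and "\<And>i. X i \<in> borel_measurable M"
    and "stationary M X"
    and "MM = rv_support M dist UNIV (X 1)" and "compact MM"
    and "n \<ge> 1" and "\<epsilon> > 0" and "k \<ge> 1" and "r \<ge> 1" and "k * r \<le> n"
  defines "Y \<equiv> (\<lambda>i w. (\<lambda>j\<in>{..<r}. X ((i - 1) * r + 1 + j) w))"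
    and "Mdr \<equiv> rv_support M (block_dist r) (blocks r) (\<lambda>w. (\<lambda>j\<in>{..<r}. X (1 + j) w))"
  shows "measure M {w\<in>space M. hausdorff_dist dist ((\<lambda>i. X i w) ` {1..n}) MM > ereal \<epsilon>}
           \<le> measure M {w\<in>space M. hausdorff_dist (block_dist r) ((\<lambda>i. Y i w) ` {1..k}) Mdr > ereal \<epsilon>}
       \<and> ((SUP x\<in>Mdr. measure M {w\<in>space M. block_dist r (Y 1 w) x > \<epsilon> / 4}) < 1 \<longrightarrow>
           measure M {w\<in>space M. hausdorff_dist (block_dist r) ((\<lambda>i. Y i w) ` {1..k}) Mdr > ereal \<epsilon>}
           \<le> (SUP x\<in>Mdr. measure M {w\<in>space M. Min ((\<lambda>i. block_dist r (Y i w) x) ` {1..k}) > \<epsilon> / 2})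
              / (1 - (SUP x\<in>Mdr. measure M {w\<in>space M. block_dist r (Y 1 w) x > \<epsilon> / 4})))"
proof -
  interpret stationary_process M X
    using assms(1-3) by (simp add: stationary_process_def stationary_process_axioms_def)
  have Y: "Y = block r X"
    unfolding Y_def block_def ..
  have Mdr: "Mdr = block_support r"
    unfolding Mdr_def block_def by simp
  show ?thesis
    unfolding Y Mdr assms(4)
    using prob_hausdorff_le_prob_block_hausdorff[of r k n \<epsilon>] prob_block_hausdorff_le[of k \<epsilon> r] assms(7-10)
    by auto
qed

end
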